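(* Let $R=(\mathbb{C},\mathbb{C}^4,\mathbb{C};u_0,\dots,u_3,v_0,\dots,v_3)$ be a representation of $\mathbf{Q}$ with dimension vector $(1,4,1)$. If $R$ is globally injective, then $R$ is not locally surjective if and only if $R$ has a subrepresentation of dimension vector $(1,b,0)$ for some $b\in\{0,1,2,3,4\}$. If $R$ is globally surjective, then $R$ is not locally injective if and only if $R$ has a subrepresentation of dimension vector $(1,b,0)$ for some $b\in\{0,1,2,3,4\}$.
   Context: The quiver $\mathbf{Q}$ has vertices $-1,0,1$, arrows $\eta_0,\dots,\eta_3:-1\to0$, $\phi_0,\dots,\phi_3:0\to1$ and relations $\phi_i\eta_j+\phi_j\eta_i=0$; a representation consists of vector spaces $V_{-1},V_0,V_1$ and linear maps $u_i:V_{-1}\to V_0$, $v_i:V_0\to V_1$ with $v_iu_j+v_ju_i=0$. $R$ is globally injective (resp. surjective) if $\sum\lambda_iu_i$ is injective (resp. $\sum\lambda_iv_i$ is surjective) for all $\lambda\in\mathbb{C}^4\setminus\{0\}$; locally injective (resp. surjective) if this holds for all $[\lambda]\in\mathbb{P}^3$ outside a closed subset of codimension at least 2. *)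

theory Defs
  imports "HOL-Analysis.Analysis"
begin

text \<open>The arrow eta_i is represented by the
  vector u i (the linear map C -> C^4, t |-> t u_i) and the arrow phi_i by the
  covector v i (the linear map C^4 -> C, x |-> sum_k (v i)_k x_k).\<close>

definition umap :: "complex^4 \<Rightarrow> complex \<Rightarrow> complex^4" where
  "umap w t = t *s w"

definition vmap :: "complex^4 \<Rightarrow> complex^4 \<Rightarrow> complex" where
  "vmap w x = (\<Sum>k\<in>UNIV. w $ k * x $ k)"

definition is_rep :: "(4 \<Rightarrow> complex^4) \<Rightarrow> (4 \<Rightarrow> complex^4) \<Rightarrow> bool" where
  "is_rep u v \<longleftrightarrow> (\<forall>i j t. vmap (v i) (umap (u j) t) + vmap (v j) (umap (u i) t) = 0)"

definition lam_u :: "(4 \<Rightarrow> complex^4) \<Rightarrow> complex^4 \<Rightarrow> complex \<Rightarrow> complex^4" where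
  "lam_u u l t = (\<Sum>i\<in>UNIV. l $ i *s umap (u i) t)"

definition lam_v :: "(4 \<Rightarrow> complex^4) \<Rightarrow> complex^4 \<Rightarrow> complex^4 \<Rightarrow> complex" where
  "lam_v v l x = (\<Sum>i\<in>UNIV. l $ i * vmap (v i) x)"

definition globally_injective where
  "globally_injective u \<longleftrightarrow> (\<forall>l. l \<noteq> 0 \<longrightarrow> inj (lam_u u l))"

definition globally_surjective where
  "globally_surjective v \<longleftrightarrow> (\<forall>l. l \<noteq> 0 \<longrightarrow> surj (lam_v v l))"

definition poly_fun :: "(complex^4 \<Rightarrow> complex) \<Rightarrow> bool" where
  "poly_fun f \<longleftrightarrow> (\<exists>A c. finite A \<and>
     (\<forall>x. f x = (\<Sum>\<alpha>\<in>A. c \<alpha> * (\<Prod>i\<in>UNIV. (x $ i) ^ (\<alpha> i)))))"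

definition zclosed :: "(complex^4) set \<Rightarrow> bool" where
  "zclosed Z \<longleftrightarrow> (\<exists>F. (\<forall>f\<in>F. poly_fun f) \<and> Z = {x. \<forall>f\<in>F. f x = 0})"

text \<open>Cones: closed subsets of P^3 correspond to Zariski closed cones in C^4.\<close>
definition is_cone :: "(complex^4) set \<Rightarrow> bool" where
  "is_cone Z \<longleftrightarrow> (\<forall>x\<in>Z. \<forall>c. c *s x \<in> Z)"

definition zirreducible :: "(complex^4) set \<Rightarrow> bool" where
  "zirreducible Y \<longleftrightarrow> Y \<noteq> {} \<and>
     (\<forall>Y1 Y2. zclosed Y1 \<longrightarrow> zclosed Y2 \<longrightarrow> Y \<subseteq> Y1 \<union> Y2 \<longrightarrow> Y \<subseteq> Y1 \<or> Y \<subseteq> Y2)"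

definition kdim_le :: "(complex^4) set \<Rightarrow> nat \<Rightarrow> bool" where
  "kdim_le Z d \<longleftrightarrow> \<not> (\<exists>Y. (\<forall>k\<le>Suc d. zclosed (Y k) \<and> zirreducible (Y k) \<and> Y k \<subseteq> Z)
       \<and> (\<forall>k<Suc d. Y k \<subset> Y (Suc k)))"

text \<open>A closed subset of P^3 of codimension at least 2 (projective dimension
  at most 1) = a Zariski closed cone in C^4 of (affine) dimension at most 2.\<close>
definition codim2_closed :: "(complex^4) set \<Rightarrow> bool" where
  "codim2_closed Z \<longleftrightarrow> zclosed Z \<and> is_cone Z \<and> kdim_le Z 2"

definition locally_injective where
  "locally_injective u \<longleftrightarrow>
     (\<exists>Z. codim2_closed Z \<and> (\<forall>l. l \<noteq> 0 \<longrightarrow> l \<notin> Z \<longrightarrow> inj (lam_u u l)))"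

definition locally_surjective where
  "locally_surjective v \<longleftrightarrow>
     (\<exists>Z. codim2_closed Z \<and> (\<forall>l. l \<noteq> 0 \<longrightarrow> l \<notin> Z \<longrightarrow> surj (lam_v v l)))"

text \<open>Subrepresentation of dimension vector (1,b,0): W_{-1} = C,
  W_0 a b-dimensional subspace of C^4, W_1 = 0, stable under all arrows.\<close>
definition has_subrep_1b0 :: "(4 \<Rightarrow> complex^4) \<Rightarrow> (4 \<Rightarrow> complex^4) \<Rightarrow> nat \<Rightarrow> bool" where
  "has_subrep_1b0 u v b \<longleftrightarrow> (\<exists>W. vec.subspace W \<and> vec.dim W = b \<and>
     (\<forall>i t. umap (u i) t \<in> W) \<and> (\<forall>i. \<forall>x\<in>W. vmap (v i) x = 0))"

end

theory Submission
  imports Defs "Subresultants.Subresultant_Gcd" "HOL-Computational_Algebra.Field_as_Ring"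
begin

(* Let M i j = vmap (v i) (u j). The relations say exactly that M is antisymmetric, and a
   subrepresentation of dimension vector (1,b,0) exists iff M = 0 (take W = span of the u_i).
   If M a b \<noteq> 0, then sum_i l_i u_i = 0, and by antisymmetry also sum_i l_i v_i = 0, forces
   sum_i M a i l_i = sum_i M b i l_i = 0. These two forms are independent, so their common kernel
   is a plane, i.e. a line in P^3, and R is locally injective and locally surjective.
   If M = 0 and the u_i are independent, they span C^4, so all v_i vanish and no sum_i l_i v_i
   is surjective: the exceptional set would be all of P^3.
   As vmap is symmetric, the second half is the first with u and v exchanged.
   The algebraic geometry needed is that a plane has Krull dimension at most 2: by a resultant
   argument, a proper closed subset of an irreducible proper closed subset of the plane has
   finitely many values of each coordinate, hence is finite, hence at most a point. *)

no_notation Matrix.vec_index (infixl "$" 100)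

section \<open>Polynomial functions on C^4\<close>

definition monomial :: "(4 \<Rightarrow> nat) \<Rightarrow> complex^4 \<Rightarrow> complex" where
  "monomial \<alpha> x = (\<Prod>i\<in>UNIV. (x $ i) ^ \<alpha> i)"

lemma poly_fun_iff_monomials:
  "poly_fun f \<longleftrightarrow> (\<exists>A c. finite A \<and> (\<forall>x. f x = (\<Sum>\<alpha>\<in>A. c \<alpha> * monomial \<alpha> x)))"
  unfolding poly_fun_def monomial_def ..

lemma poly_fun_intro:
  "finite A \<Longrightarrow> (\<And>x. f x = (\<Sum>\<alpha>\<in>A. c \<alpha> * monomial \<alpha> x)) \<Longrightarrow> poly_fun f"
  unfolding poly_fun_iff_monomials by blast

lemma poly_fun_const: "poly_fun (\<lambda>x. k)"
  unfolding poly_fun_iff_monomials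
  by (intro exI[of _ "{\<lambda>_. 0}"] exI[of _ "\<lambda>_. k"]) (simp add: monomial_def)

lemma poly_fun_coord: "poly_fun (\<lambda>x. x $ i)"
proof -
  have "monomial (\<lambda>j. if j = i then 1 else 0) x = (\<Prod>j\<in>UNIV. if j = i then x $ j else 1)" for x
    unfolding monomial_def by (rule prod.cong) auto
  then have "monomial (\<lambda>j. if j = i then 1 else 0) x = x $ i" for x
    by simp
  then show ?thesis
    unfolding poly_fun_iff_monomials
    by (intro exI[of _ "{\<lambda>j. if j = i then 1 else 0}"] exI[of _ "\<lambda>_. 1"]) simp
qed

lemma poly_fun_add:
  assumes "poly_fun f" "poly_fun g"
  shows "poly_fun (\<lambda>x. f x + g x)"
proof -
  obtain A c where A: "finite A" "\<And>x. f x = (\<Sum>\<alpha>\<in>A. c \<alpha> * monomial \<alpha> x)"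
    using assms(1) unfolding poly_fun_iff_monomials by blast
  obtain B d where B: "finite B" "\<And>x. g x = (\<Sum>\<alpha>\<in>B. d \<alpha> * monomial \<alpha> x)"
    using assms(2) unfolding poly_fun_iff_monomials by blast
  define e where "e \<alpha> = (if \<alpha> \<in> A then c \<alpha> else 0) + (if \<alpha> \<in> B then d \<alpha> else 0)" for \<alpha>
  have "f x + g x = (\<Sum>\<alpha>\<in>A \<union> B. e \<alpha> * monomial \<alpha> x)" for x
  proof -
    have "(\<Sum>\<alpha>\<in>A \<union> B. e \<alpha> * monomial \<alpha> x) =
        (\<Sum>\<alpha>\<in>A \<union> B. if \<alpha> \<in> A then c \<alpha> * monomial \<alpha> x else 0) +
        (\<Sum>\<alpha>\<in>A \<union> B. if \<alpha> \<in> B then d \<alpha> * monomial \<alpha> x else 0)"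
      unfolding e_def sum.distrib[symmetric] by (rule sum.cong) (auto simp: distrib_right)
    also have "\<dots> = f x + g x"
      unfolding A(2) B(2) using A(1) B(1)
      by (simp add: sum.inter_restrict[symmetric] Int_absorb1 Int_absorb2)
    finally show ?thesis ..
  qed
  then show ?thesis
    using A(1) B(1) by (intro poly_fun_intro[of "A \<union> B"]) auto
qed

lemma monomial_add: "monomial (\<lambda>i. \<alpha> i + \<beta> i) x = monomial \<alpha> x * monomial \<beta> x"
  unfolding monomial_def by (simp add: power_add prod.distrib)

lemma poly_fun_mult:
  assumes "poly_fun f" "poly_fun g"
  shows "poly_fun (\<lambda>x. f x * g x)"
proof -
  obtain A c where A: "finite A" "\<And>x. f x = (\<Sum>\<alpha>\<in>A. c \<alpha> * monomial \<alpha> x)"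
    using assms(1) unfolding poly_fun_iff_monomials by blast
  obtain B d where B: "finite B" "\<And>x. g x = (\<Sum>\<alpha>\<in>B. d \<alpha> * monomial \<alpha> x)"
    using assms(2) unfolding poly_fun_iff_monomials by blast
  let ?sum = "\<lambda>p :: (4 \<Rightarrow> nat) \<times> (4 \<Rightarrow> nat). (\<lambda>i. fst p i + snd p i)"
  let ?coeff = "\<lambda>\<gamma>. \<Sum>p\<in>{p \<in> A \<times> B. ?sum p = \<gamma>}. c (fst p) * d (snd p)"
  have "f x * g x = (\<Sum>\<gamma>\<in>?sum ` (A \<times> B). ?coeff \<gamma> * monomial \<gamma> x)" for x
  proof -
    have "f x * g x = (\<Sum>\<alpha>\<in>A. \<Sum>\<beta>\<in>B. c \<alpha> * d \<beta> * monomial (\<lambda>i. \<alpha> i + \<beta> i) x)"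
      unfolding A(2) B(2) sum_product monomial_add by (simp add: algebra_simps)
    also have "\<dots> = (\<Sum>p\<in>A \<times> B. c (fst p) * d (snd p) * monomial (?sum p) x)"
      by (simp add: sum.cartesian_product split_def)
    also have "\<dots> = (\<Sum>\<gamma>\<in>?sum ` (A \<times> B).
        \<Sum>p\<in>{p \<in> A \<times> B. ?sum p = \<gamma>}. c (fst p) * d (snd p) * monomial (?sum p) x)"
      by (rule sum.image_gen) (use A(1) B(1) in simp)
    also have "\<dots> = (\<Sum>\<gamma>\<in>?sum ` (A \<times> B). ?coeff \<gamma> * monomial \<gamma> x)"
      by (rule sum.cong[OF refl]) (simp add: sum_distrib_right)
    finally show ?thesis .
  qed
  then show ?thesis
    using A(1) B(1) by (intro poly_fun_intro[of "?sum ` (A \<times> B)"]) auto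
qed

lemma poly_fun_sum:
  "finite S \<Longrightarrow> (\<And>s. s \<in> S \<Longrightarrow> poly_fun (f s)) \<Longrightarrow> poly_fun (\<lambda>x. \<Sum>s\<in>S. f s x)"
  by (induction S rule: finite_induct) (auto intro: poly_fun_add poly_fun_const)

lemma poly_fun_vmap: "poly_fun (\<lambda>x. vmap w x)"
  unfolding vmap_def by (intro poly_fun_sum poly_fun_mult poly_fun_const poly_fun_coord) auto

lemma poly_fun_poly:
  assumes "poly_fun f"
  shows "poly_fun (\<lambda>x. poly p (f x))"
proof (induction p)
  case 0
  show ?case by (simp add: poly_fun_const)
next
  case (pCons a p)
  show ?case
    using poly_fun_add[OF poly_fun_const poly_fun_mult[OF assms pCons.IH]] by simp
qed

section \<open>Bivariate polynomials\<close>

(* p is a polynomial in t whose coefficients are polynomials in s *)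
definition poly2 :: "'a::comm_ring_1 poly poly \<Rightarrow> 'a \<Rightarrow> 'a \<Rightarrow> 'a" where
  "poly2 p s t = poly (poly p [:t:]) s"

lemma poly2_0 [simp]: "poly2 0 s t = 0"
  by (simp add: poly2_def)

lemma poly2_pCons [simp]: "poly2 (pCons a p) s t = poly a s + t * poly2 p s t"
  by (simp add: poly2_def)

lemma poly2_mult [simp]: "poly2 (p * q) s t = poly2 p s t * poly2 q s t"
  by (simp add: poly2_def)

lemma poly2_map_poly: "poly2 p s t = poly (map_poly (\<lambda>c. poly c s) p) t"
  using poly_hom.poly_map_poly[of s p "[:t:]"] by (simp add: poly2_def)

lemma poly_fun_poly2:
  assumes "poly_fun f" "poly_fun g"
  shows "poly_fun (\<lambda>x. poly2 p (f x) (g x))"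
proof (induction p)
  case 0
  show ?case by (simp add: poly_fun_const)
next
  case (pCons a p)
  show ?case
    using poly_fun_add[OF poly_fun_poly[OF assms(1)] poly_fun_mult[OF assms(2) pCons.IH]] by simp
qed

lemma poly_fun_on_plane:
  assumes "poly_fun F"
  obtains p where "\<And>s t. F (s *s P + t *s Q) = poly2 p s t"
proof -
  obtain A c where A: "finite A" "\<And>x. F x = (\<Sum>\<alpha>\<in>A. c \<alpha> * monomial \<alpha> x)"
    using assms unfolding poly_fun_iff_monomials by blast
  define p where
    "p = (\<Sum>\<alpha>\<in>A. [:[:c \<alpha>:]:] * (\<Prod>i\<in>UNIV. [:[:0, P $ i:], [:Q $ i:]:] ^ \<alpha> i))"
  have "F (s *s P + t *s Q) = poly2 p s t" for s t
    unfolding A(2) p_def monomial_def poly2_def by (simp add: poly_sum poly_prod algebra_simps)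
  then show ?thesis by (rule that)
qed

lemma poly_fun_on_line:
  assumes "poly_fun F"
  obtains q where "\<And>t. F (a + t *s b) = poly q t"
proof -
  obtain p where "\<And>s t. F (s *s a + t *s b) = poly2 p s t"
    using poly_fun_on_plane[OF assms, where P = a and Q = b] by blast
  then have "F (a + t *s b) = poly (map_poly (\<lambda>c. poly c 1) p) t" for t
    by (metis poly2_map_poly vector_smult_lid)
  then show ?thesis by (rule that)
qed

lemma resultant_vanishes_at_common_zero:
  fixes f g :: "complex poly poly"
  assumes "poly (lead_coeff f) s \<noteq> 0" "poly (lead_coeff g) s \<noteq> 0"
    and "poly2 f s t = 0" "poly2 g s t = 0"
  shows "poly (resultant f g) s = 0"
proof -
  define fs where "fs = map_poly (\<lambda>c. poly c s) f"
  define gs where "gs = map_poly (\<lambda>c. poly c s) g"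
  have lc: "coeff fs (degree f) \<noteq> 0" "coeff gs (degree g) \<noteq> 0"
    unfolding fs_def gs_def using assms(1,2) by (simp_all add: coeff_map_poly)
  have deg: "degree fs = degree f" "degree gs = degree g"
    using degree_map_poly_le[of "\<lambda>c. poly c s" f] degree_map_poly_le[of "\<lambda>c. poly c s" g]
      le_degree[OF lc(1)] le_degree[OF lc(2)]
    unfolding fs_def gs_def by simp_all
  have "poly fs t = 0" "poly gs t = 0"
    using assms(3,4) unfolding fs_def gs_def poly2_map_poly .
  then have "[:-t, 1:] dvd gcd fs gs" by (simp add: poly_eq_0_iff_dvd)
  moreover have "gcd fs gs \<noteq> 0" using lc(1) by auto
  ultimately have "degree [:-t, 1:] \<le> degree (gcd fs gs)" by (rule dvd_imp_degree_le)
  then have "resultant fs gs = 0" by (simp add: resultant_0_gcd)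
  moreover have "resultant fs gs = poly (resultant f g) s"
    unfolding fs_def gs_def
    by (rule poly_hom.resultant_map_poly) (use deg in \<open>simp_all add: fs_def gs_def\<close>)
  ultimately show ?thesis by simp
qed

lemma finite_common_zeros_fst:
  fixes f g :: "complex poly poly"
  assumes "f \<noteq> 0" "g \<noteq> 0" "resultant f g \<noteq> 0"
  shows "finite {s. \<exists>t. poly2 f s t = 0 \<and> poly2 g s t = 0}"
proof -
  define R where "R = resultant f g * lead_coeff f * lead_coeff g"
  have "R \<noteq> 0" unfolding R_def using assms by simp
  moreover have "{s. \<exists>t. poly2 f s t = 0 \<and> poly2 g s t = 0} \<subseteq> {s. poly R s = 0}"
    using resultant_vanishes_at_common_zero by (fastforce simp: R_def)
  ultimately show ?thesis using poly_roots_finite finite_subset by blast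
qed

section \<open>Zariski closed and irreducible sets\<close>

lemma zclosed_zero_set: "(\<And>f. f \<in> F \<Longrightarrow> poly_fun f) \<Longrightarrow> zclosed {x. \<forall>f\<in>F. f x = 0}"
  unfolding zclosed_def by blast

lemma zclosed_zero_set_single: "poly_fun f \<Longrightarrow> zclosed {x. f x = 0}"
  using zclosed_zero_set[of "{f}"] by simp

lemma zclosed_separating_poly_fun:
  assumes "zclosed Y" "y \<notin> Y"
  obtains f where "poly_fun f" "\<And>x. x \<in> Y \<Longrightarrow> f x = 0" "f y \<noteq> 0"
  using assms unfolding zclosed_def by blast

lemma zclosed_coord_zero: "zclosed {x. \<forall>i\<in>I. x $ i = 0}"
proof -
  have "zclosed {x. \<forall>f\<in>(\<lambda>i x. x $ i) ` I. f x = 0}"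
    by (rule zclosed_zero_set) (auto intro: poly_fun_coord)
  moreover have "{x. \<forall>f\<in>(\<lambda>i x. x $ i) ` I. f x = 0} = {x. \<forall>i\<in>I. x $ i = 0}" by auto
  ultimately show ?thesis by simp
qed

lemma zclosed_Un:
  assumes "zclosed Y1" "zclosed Y2"
  shows "zclosed (Y1 \<union> Y2)"
proof -
  obtain F where F: "\<forall>f\<in>F. poly_fun f" "Y1 = {x. \<forall>f\<in>F. f x = 0}"
    using assms(1) unfolding zclosed_def by blast
  obtain G where G: "\<forall>g\<in>G. poly_fun g" "Y2 = {x. \<forall>g\<in>G. g x = 0}"
    using assms(2) unfolding zclosed_def by blast
  let ?H = "(\<lambda>(f, g) x. f x * g x) ` (F \<times> G)"
  have "Y1 \<union> Y2 = {x. \<forall>h\<in>?H. h x = 0}"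
  proof (intro equalityI subsetI)
    fix x assume "x \<in> Y1 \<union> Y2"
    then show "x \<in> {x. \<forall>h\<in>?H. h x = 0}" unfolding F(2) G(2) by auto
  next
    fix x assume x: "x \<in> {x. \<forall>h\<in>?H. h x = 0}"
    show "x \<in> Y1 \<union> Y2"
    proof (rule ccontr)
      assume "x \<notin> Y1 \<union> Y2"
      then obtain f g where "f \<in> F" "g \<in> G" "f x \<noteq> 0" "g x \<noteq> 0"
        unfolding F(2) G(2) by blast
      moreover have "(\<lambda>x. f x * g x) \<in> ?H" using \<open>f \<in> F\<close> \<open>g \<in> G\<close> by force
      ultimately show False using x by auto
    qed
  qed
  moreover have "\<forall>h\<in>?H. poly_fun h" using F(1) G(1) by (auto intro: poly_fun_mult)
  ultimately show ?thesis unfolding zclosed_def by blast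
qed

lemma zclosed_singleton: "zclosed {p}"
proof -
  have singleton_eq: "{p} = {x. \<forall>f\<in>range (\<lambda>i x. x $ i - p $ i). f x = 0}"
    by (auto simp: Finite_Cartesian_Product.vec_eq_iff)
  have "poly_fun (\<lambda>x. x $ i - p $ i)" for i
    using poly_fun_add[OF poly_fun_coord poly_fun_const, of i "- p $ i"] by simp
  then show ?thesis
    unfolding singleton_eq by (intro zclosed_zero_set) blast
qed

lemma zclosed_finite: "finite S \<Longrightarrow> zclosed S"
proof (induction S rule: finite_induct)
  case empty
  have "zclosed {x. \<forall>f\<in>{\<lambda>x. 1 :: complex}. f x = 0}"
    by (rule zclosed_zero_set) (simp add: poly_fun_const)
  then show ?case by simp
next
  case (insert x S)
  have "insert x S = {x} \<union> S" by simp
  then show ?case using zclosed_Un[OF zclosed_singleton insert.IH] by simp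
qed

lemma zirreducibleD:
  "zirreducible Y \<Longrightarrow> zclosed Y1 \<Longrightarrow> zclosed Y2 \<Longrightarrow> Y \<subseteq> Y1 \<union> Y2 \<Longrightarrow> Y \<subseteq> Y1 \<or> Y \<subseteq> Y2"
  unfolding zirreducible_def by blast

lemma zirreducible_finite_singleton:
  assumes "zirreducible Y" "finite Y"
  obtains p where "Y = {p}"
proof -
  obtain p where p: "p \<in> Y" using assms(1) unfolding zirreducible_def by blast
  have "Y \<subseteq> {p} \<union> (Y - {p})" by blast
  then have "Y \<subseteq> {p} \<or> Y \<subseteq> Y - {p}"
    using zirreducibleD[OF assms(1) zclosed_singleton zclosed_finite] assms(2) by blast
  then have "Y = {p}" using p by blast
  then show ?thesis by (rule that)
qed

lemma zirreducible_if_line_closed: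
  assumes "a0 \<in> Y" "\<And>a b t. a \<in> Y \<Longrightarrow> b \<in> Y \<Longrightarrow> a + t *s (b - a) \<in> Y"
  shows "zirreducible Y"
  unfolding zirreducible_def
proof (intro conjI allI impI)
  show "Y \<noteq> {}" using assms(1) by blast
  fix Y1 Y2 assume "zclosed Y1" "zclosed Y2" and cover: "Y \<subseteq> Y1 \<union> Y2"
  show "Y \<subseteq> Y1 \<or> Y \<subseteq> Y2"
  proof (rule ccontr)
    assume "\<not> (Y \<subseteq> Y1 \<or> Y \<subseteq> Y2)"
    then obtain a b where ab: "a \<in> Y" "a \<notin> Y1" "b \<in> Y" "b \<notin> Y2" by blast
    obtain F1 where F1: "poly_fun F1" "\<And>x. x \<in> Y1 \<Longrightarrow> F1 x = 0" "F1 a \<noteq> 0"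
      using zclosed_separating_poly_fun[OF \<open>zclosed Y1\<close> ab(2)] by blast
    obtain F2 where F2: "poly_fun F2" "\<And>x. x \<in> Y2 \<Longrightarrow> F2 x = 0" "F2 b \<noteq> 0"
      using zclosed_separating_poly_fun[OF \<open>zclosed Y2\<close> ab(4)] by blast
    obtain p1 where p1: "\<And>t. F1 (a + t *s (b - a)) = poly p1 t"
      using poly_fun_on_line[OF F1(1)] by blast
    obtain p2 where p2: "\<And>t. F2 (a + t *s (b - a)) = poly p2 t"
      using poly_fun_on_line[OF F2(1)] by blast
    have "poly (p1 * p2) t = 0" for t
    proof -
      have "a + t *s (b - a) \<in> Y1 \<union> Y2" using assms(2)[OF ab(1) ab(3)] cover by blast
      then show ?thesis unfolding poly_mult p1[symmetric] p2[symmetric] using F1(2) F2(2) by auto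
    qed
    then have "p1 * p2 = 0" using poly_all_0_iff_0 by blast
    moreover have "p1 \<noteq> 0" using p1[of 0] F1(3) by auto
    moreover have "p2 \<noteq> 0" using p2[of 1] F2(3) by auto
    ultimately show False by simp
  qed
qed

section \<open>Krull dimension\<close>

lemma not_kdim_le_UNIV: "\<not> kdim_le (UNIV :: (complex^4) set) 2"
proof -
  define Y :: "nat \<Rightarrow> (complex^4) set" where
    "Y k = {x. \<forall>i\<in>set (drop k [1, 2, 3]). x $ i = 0}" for k
  have "zclosed (Y k) \<and> zirreducible (Y k)" for k
    unfolding Y_def by (auto intro: zclosed_coord_zero zirreducible_if_line_closed[of 0])
  moreover have "Y k \<subset> Y (Suc k)" if "k < 3" for k
  proof
    show "Y k \<subseteq> Y (Suc k)"
      unfolding Y_def using set_drop_subset_set_drop[of k "Suc k" "[1, 2, 3 :: 4]"] by auto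
    have "k = 0 \<or> k = 1 \<or> k = 2" using that by auto
    then have "axis ([1, 2, 3] ! k) 1 \<in> Y (Suc k) - Y k"
      unfolding Y_def by (auto simp: axis_def)
    then show "Y k \<noteq> Y (Suc k)" by blast
  qed
  ultimately show ?thesis
    unfolding kdim_le_def by (auto simp: numeral_3_eq_3)
qed

definition coord_plane :: "4 \<Rightarrow> 4 \<Rightarrow> complex^4 \<Rightarrow> complex^4 \<Rightarrow> (complex^4) set" where
  "coord_plane c d P Q = {y. y = y $ c *s P + y $ d *s Q}"

lemma coord_plane_swap: "coord_plane c d P Q = coord_plane d c Q P"
  unfolding coord_plane_def by (simp add: add.commute)

lemma coord_plane_separating_poly2:
  assumes "zclosed Z" "y0 \<in> coord_plane c d P Q" "y0 \<notin> Z"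
  obtains g where "\<And>z. z \<in> Z \<Longrightarrow> z \<in> coord_plane c d P Q \<Longrightarrow> poly2 g (z $ c) (z $ d) = 0"
    and "poly2 g (y0 $ c) (y0 $ d) \<noteq> 0"
proof -
  obtain G where G: "poly_fun G" "\<And>z. z \<in> Z \<Longrightarrow> G z = 0" "G y0 \<noteq> 0"
    using zclosed_separating_poly_fun[OF assms(1,3)] by blast
  obtain g where g: "\<And>s t. G (s *s P + t *s Q) = poly2 g s t"
    using poly_fun_on_plane[OF G(1)] by blast
  have G_eq: "G y = poly2 g (y $ c) (y $ d)" if "y \<in> coord_plane c d P Q" for y
  proof -
    have "G y = G (y $ c *s P + y $ d *s Q)"
      using that unfolding coord_plane_def by (intro arg_cong[of _ _ G]) simp
    also have "\<dots> = poly2 g (y $ c) (y $ d)" by (rule g)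
    finally show ?thesis .
  qed
  show ?thesis
  proof (rule that)
    fix z assume "z \<in> Z" "z \<in> coord_plane c d P Q"
    then show "poly2 g (z $ c) (z $ d) = 0" using G_eq G(2) by metis
  next
    show "poly2 g (y0 $ c) (y0 $ d) \<noteq> 0" using G_eq[OF assms(2)] G(3) by simp
  qed
qed

lemma degree_gcd_eq_0_if_minimal_vanishing:
  fixes f g :: "complex poly poly"
  assumes "zirreducible Y" "f \<noteq> 0"
    and f_vanishes: "\<And>y. y \<in> Y \<Longrightarrow> poly2 f (y $ c) (y $ d) = 0"
    and f_minimal: "\<And>q. q \<noteq> 0 \<Longrightarrow> (\<forall>y\<in>Y. poly2 q (y $ c) (y $ d) = 0) \<Longrightarrow> degree f \<le> degree q"
    and "y0 \<in> Y" "poly2 g (y0 $ c) (y0 $ d) \<noteq> 0"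
  shows "degree (gcd f g) = 0"
proof (rule ccontr)
  define h where "h = gcd f g"
  assume "degree (gcd f g) \<noteq> 0"
  then have deg_h: "degree h \<noteq> 0" unfolding h_def .
  obtain f1 where f1: "f = h * f1" unfolding h_def by (meson dvdE gcd_dvd1)
  obtain g1 where g1: "g = h * g1" unfolding h_def by (meson dvdE gcd_dvd2)
  have "f1 \<noteq> 0" "h \<noteq> 0" using \<open>f \<noteq> 0\<close> f1 by auto
  then have "degree f = degree h + degree f1" unfolding f1 by (rule degree_mult_eq[rotated])
  then have "degree f1 < degree f" using deg_h by simp
  let ?Zh = "{x. poly2 h (x $ c) (x $ d) = 0}" and ?Zf1 = "{x. poly2 f1 (x $ c) (x $ d) = 0}"
  have "zclosed ?Zh" "zclosed ?Zf1"
    by (intro zclosed_zero_set_single poly_fun_poly2 poly_fun_coord)+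
  moreover have "Y \<subseteq> ?Zh \<union> ?Zf1"
  proof
    fix y assume "y \<in> Y"
    then have "poly2 h (y $ c) (y $ d) * poly2 f1 (y $ c) (y $ d) = 0"
      using f_vanishes unfolding f1 by simp
    then show "y \<in> ?Zh \<union> ?Zf1" by simp
  qed
  ultimately have "Y \<subseteq> ?Zh \<or> Y \<subseteq> ?Zf1" by (rule zirreducibleD[OF assms(1)])
  then show False
  proof
    assume "Y \<subseteq> ?Zh"
    then have "poly2 g (y0 $ c) (y0 $ d) = 0" using \<open>y0 \<in> Y\<close> unfolding g1 by auto
    then show False using assms(6) by simp
  next
    assume "Y \<subseteq> ?Zf1"
    then have "degree f \<le> degree f1" using f_minimal \<open>f1 \<noteq> 0\<close> by blast
    then show False using \<open>degree f1 < degree f\<close> by simp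
  qed
qed

lemma finite_coord_image_if_proper_closed:
  assumes "Y \<subset> coord_plane c d P Q" "zclosed Y" "zirreducible Y" "zclosed Z" "Z \<subset> Y"
  shows "finite ((\<lambda>z. z $ c) ` Z)"
proof -
  have Y_plane: "y \<in> coord_plane c d P Q" if "y \<in> Y" for y using that assms(1) by blast
  obtain x0 where x0: "x0 \<in> coord_plane c d P Q" "x0 \<notin> Y" using assms(1) by blast
  obtain y0 where y0: "y0 \<in> Y" "y0 \<notin> Z" using assms(5) by blast
  let ?vanishes = "\<lambda>q. q \<noteq> 0 \<and> (\<forall>y\<in>Y. poly2 q (y $ c) (y $ d) = 0)"
  obtain f0 where "\<And>y. y \<in> Y \<Longrightarrow> y \<in> coord_plane c d P Q \<Longrightarrow> poly2 f0 (y $ c) (y $ d) = 0"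
    and "poly2 f0 (x0 $ c) (x0 $ d) \<noteq> 0"
    using coord_plane_separating_poly2[OF assms(2) x0] by blast
  then have "?vanishes f0" using Y_plane by auto
  then obtain f where f: "?vanishes f" and f_minimal: "\<And>q. ?vanishes q \<Longrightarrow> degree f \<le> degree q"
    using ex_has_least_nat[of ?vanishes f0 degree] by blast
  obtain g where g_Z: "\<And>z. z \<in> Z \<Longrightarrow> z \<in> coord_plane c d P Q \<Longrightarrow> poly2 g (z $ c) (z $ d) = 0"
    and g_y0: "poly2 g (y0 $ c) (y0 $ d) \<noteq> 0"
    using coord_plane_separating_poly2[OF assms(4) Y_plane[OF y0(1)] y0(2)] by blast
  have "g \<noteq> 0" using g_y0 by auto
  have "degree (gcd f g) = 0"
    by (rule degree_gcd_eq_0_if_minimal_vanishing[OF assms(3), of f c d y0 g])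
      (use f f_minimal y0(1) g_y0 in auto)
  then have "finite {s. \<exists>t. poly2 f s t = 0 \<and> poly2 g s t = 0}"
    using f \<open>g \<noteq> 0\<close> by (intro finite_common_zeros_fst) (auto simp: resultant_0_gcd)
  moreover have "(\<lambda>z. z $ c) ` Z \<subseteq> {s. \<exists>t. poly2 f s t = 0 \<and> poly2 g s t = 0}"
  proof
    fix s assume "s \<in> (\<lambda>z. z $ c) ` Z"
    then obtain z where z: "z \<in> Z" "s = z $ c" by blast
    then have "z \<in> Y" using assms(5) by blast
    then have "poly2 f s (z $ d) = 0 \<and> poly2 g s (z $ d) = 0"
      using f g_Z[OF z(1) Y_plane] z(2) by blast
    then show "s \<in> {s. \<exists>t. poly2 f s t = 0 \<and> poly2 g s t = 0}" by blast
  qed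
  ultimately show ?thesis by (rule finite_subset[rotated])
qed

lemma kdim_le_coord_plane:
  assumes "Z \<subseteq> coord_plane c d P Q"
  shows "kdim_le Z 2"
  unfolding kdim_le_def
proof (rule notI, elim exE conjE)
  fix Y
  assume closed_chain: "\<forall>k\<le>Suc 2. zclosed (Y k) \<and> zirreducible (Y k) \<and> Y k \<subseteq> Z"
    and strict: "\<forall>k<Suc 2. Y k \<subset> Y (Suc k)"
  have Y: "zclosed (Y k)" "zirreducible (Y k)" "Y k \<subseteq> coord_plane c d P Q" if "k \<le> 3" for k
    using that closed_chain assms by (auto simp: numeral_3_eq_3)
  have chain: "Y 0 \<subset> Y 1" "Y 1 \<subset> Y 2" "Y 2 \<subset> Y 3"
    using strict by (auto simp: numeral_3_eq_3 numeral_2_eq_2)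
  have "Y 2 \<subset> coord_plane c d P Q" using Y(3)[of 3] chain(3) by auto
  then have "finite ((\<lambda>z. z $ c) ` Y 1)" "finite ((\<lambda>z. z $ d) ` Y 1)"
    using finite_coord_image_if_proper_closed[of "Y 2" c d P Q "Y 1"]
      finite_coord_image_if_proper_closed[of "Y 2" d c Q P "Y 1"]
      Y[of 2] Y[of 1] chain(2) by (simp_all add: coord_plane_swap)
  moreover have "Y 1 \<subseteq> (\<lambda>(s, t). s *s P + t *s Q) ` ((\<lambda>z. z $ c) ` Y 1 \<times> (\<lambda>z. z $ d) ` Y 1)"
  proof
    fix y assume y: "y \<in> Y 1"
    then have "y = (\<lambda>(s, t). s *s P + t *s Q) (y $ c, y $ d)"
      using Y(3)[of 1] unfolding coord_plane_def by auto
    then show "y \<in> (\<lambda>(s, t). s *s P + t *s Q) ` ((\<lambda>z. z $ c) ` Y 1 \<times> (\<lambda>z. z $ d) ` Y 1)"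
      using y by (intro image_eqI) auto
  qed
  ultimately have "finite (Y 1)" by (meson finite_SigmaI finite_imageI finite_subset)
  then obtain p where "Y 1 = {p}" using zirreducible_finite_singleton Y(2)[of 1] by auto
  moreover have "Y 0 \<noteq> {}" using Y(2)[of 0] unfolding zirreducible_def by simp
  ultimately show False using chain(1) by (auto simp: psubset_eq subset_singleton_iff)
qed

lemma four_indices:
  assumes "a \<noteq> (b::4)"
  obtains c d where "distinct [a, b, c, d]" "UNIV = {a, b, c, d}"
proof -
  have "card (UNIV - {a, b}) = 2" using assms by (simp add: card_Diff_subset)
  then obtain c d where "UNIV - {a, b} = {c, d}" "c \<noteq> d" unfolding card_2_iff by blast
  then show ?thesis using that assms by auto
qed

lemma common_kernel_subset_coord_plane:
  fixes \<alpha> \<beta> :: "complex^4"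
  assumes "\<alpha> $ a * \<beta> $ b - \<alpha> $ b * \<beta> $ a \<noteq> 0" "distinct [a, b, c, d]" "UNIV = {a, b, c, d}"
  obtains P Q where "{x. vmap \<alpha> x = 0 \<and> vmap \<beta> x = 0} \<subseteq> coord_plane c d P Q"
proof -
  define D where "D = \<alpha> $ a * \<beta> $ b - \<alpha> $ b * \<beta> $ a"
  \<comment> \<open>Cramer's rule expresses the a- and b-coordinates of a kernel vector through the other two\<close>
  define cramer where "cramer e = (\<chi> i.
      if i = a then (\<alpha> $ b * \<beta> $ e - \<alpha> $ e * \<beta> $ b) / D
      else if i = b then (\<alpha> $ e * \<beta> $ a - \<alpha> $ a * \<beta> $ e) / D
      else if i = e then 1 else 0)" for e
  have "{x. vmap \<alpha> x = 0 \<and> vmap \<beta> x = 0} \<subseteq> coord_plane c d (cramer c) (cramer d)"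
  proof
    fix y assume "y \<in> {x. vmap \<alpha> x = 0 \<and> vmap \<beta> x = 0}"
    then have E\<alpha>: "\<alpha>$a * y$a + \<alpha>$b * y$b + \<alpha>$c * y$c + \<alpha>$d * y$d = 0"
      and E\<beta>: "\<beta>$a * y$a + \<beta>$b * y$b + \<beta>$c * y$c + \<beta>$d * y$d = 0"
      unfolding vmap_def assms(3) using assms(2) by (simp_all add: add.assoc)
    have "D * y$a - ((\<alpha>$b * \<beta>$c - \<alpha>$c * \<beta>$b) * y$c + (\<alpha>$b * \<beta>$d - \<alpha>$d * \<beta>$b) * y$d)
        = \<beta>$b * (\<alpha>$a * y$a + \<alpha>$b * y$b + \<alpha>$c * y$c + \<alpha>$d * y$d)
          - \<alpha>$b * (\<beta>$a * y$a + \<beta>$b * y$b + \<beta>$c * y$c + \<beta>$d * y$d)"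
      unfolding D_def by (simp add: algebra_simps)
    then have "D * y$a = (\<alpha>$b * \<beta>$c - \<alpha>$c * \<beta>$b) * y$c + (\<alpha>$b * \<beta>$d - \<alpha>$d * \<beta>$b) * y$d"
      using E\<alpha> E\<beta> by simp
    moreover have "D * y$b - ((\<alpha>$c * \<beta>$a - \<alpha>$a * \<beta>$c) * y$c + (\<alpha>$d * \<beta>$a - \<alpha>$a * \<beta>$d) * y$d)
        = \<alpha>$a * (\<beta>$a * y$a + \<beta>$b * y$b + \<beta>$c * y$c + \<beta>$d * y$d)
          - \<beta>$a * (\<alpha>$a * y$a + \<alpha>$b * y$b + \<alpha>$c * y$c + \<alpha>$d * y$d)"
      unfolding D_def by (simp add: algebra_simps)
    then have "D * y$b = (\<alpha>$c * \<beta>$a - \<alpha>$a * \<beta>$c) * y$c + (\<alpha>$d * \<beta>$a - \<alpha>$a * \<beta>$d) * y$d"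
      using E\<alpha> E\<beta> by simp
    moreover have "i \<in> {a, b, c, d}" for i using assms(3) by blast
    ultimately show "y \<in> coord_plane c d (cramer c) (cramer d)"
      unfolding coord_plane_def cramer_def using assms(1,2) unfolding D_def[symmetric]
      by (auto simp: Finite_Cartesian_Product.vec_eq_iff field_simps)
  qed
  then show ?thesis using that by blast
qed

lemma codim2_closed_common_kernel:
  fixes \<alpha> \<beta> :: "complex^4"
  assumes "\<alpha> $ a * \<beta> $ b - \<alpha> $ b * \<beta> $ a \<noteq> 0"
  shows "codim2_closed {x. vmap \<alpha> x = 0 \<and> vmap \<beta> x = 0}"
proof -
  let ?K = "{x. vmap \<alpha> x = 0 \<and> vmap \<beta> x = 0}"
  have "a \<noteq> b" using assms by auto
  then obtain c d where "distinct [a, b, c, d]" "UNIV = {a, b, c, d}" by (rule four_indices)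
  then obtain P Q where "?K \<subseteq> coord_plane c d P Q"
    using common_kernel_subset_coord_plane[OF assms] by blast
  then have "kdim_le ?K 2" by (rule kdim_le_coord_plane)
  moreover have "zclosed ?K"
    using zclosed_zero_set[of "{\<lambda>x. vmap \<alpha> x, \<lambda>x. vmap \<beta> x}"] poly_fun_vmap by auto
  moreover have "is_cone ?K"
    unfolding is_cone_def vmap_def by (simp add: sum_distrib_left[symmetric] algebra_simps)
  ultimately show ?thesis unfolding codim2_closed_def by blast
qed

lemma codim2_closed_misses_nonzero:
  assumes "codim2_closed Z"
  shows "\<exists>l. l \<noteq> 0 \<and> l \<notin> Z"
proof (rule ccontr)
  assume "\<not> (\<exists>l. l \<noteq> 0 \<and> l \<notin> Z)"
  then have nonzero: "l \<in> Z" if "l \<noteq> 0" for l using that by blast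
  have "axis 0 1 \<in> Z" by (rule nonzero) simp
  then have "0 *s axis 0 1 \<in> Z" using assms unfolding codim2_closed_def is_cone_def by blast
  then have "x \<in> Z" for x using nonzero by (cases "x = 0") auto
  then have "Z = UNIV" by blast
  then show False using assms not_kdim_le_UNIV unfolding codim2_closed_def by simp
qed

section \<open>The representation\<close>

lemma vmap_commute: "vmap a b = vmap b a"
  unfolding vmap_def by (simp add: mult.commute)

lemma vmap_add: "vmap w (x + y) = vmap w x + vmap w y"
  unfolding vmap_def by (simp add: sum.distrib algebra_simps)

lemma vmap_scale: "vmap w (c *s x) = c * vmap w x"
  unfolding vmap_def by (simp add: sum_distrib_left algebra_simps)

lemma vmap_zero: "vmap w 0 = 0"
  unfolding vmap_def by simp

lemma vmap_sum: "vmap w (\<Sum>i\<in>S. f i) = (\<Sum>i\<in>S. vmap w (f i))"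
  unfolding vmap_def by (simp add: sum_component sum_distrib_left) (rule sum.swap)

lemma vmap_axis: "vmap w (axis k c) = w $ k * c"
proof -
  have "vmap w (axis k c) = (\<Sum>j\<in>UNIV. if j = k then w $ j * c else 0)"
    unfolding vmap_def axis_def by (rule sum.cong) auto
  then show ?thesis by simp
qed

definition lin_comb :: "(4 \<Rightarrow> complex^4) \<Rightarrow> complex^4 \<Rightarrow> complex^4" where
  "lin_comb w l = (\<Sum>i\<in>UNIV. l $ i *s w i)"

lemma vmap_lin_comb: "vmap x (lin_comb w l) = (\<Sum>i\<in>UNIV. l $ i * vmap x (w i))"
  unfolding lin_comb_def vmap_sum vmap_scale ..

lemma inj_lam_u_iff: "inj (lam_u u l) \<longleftrightarrow> lin_comb u l \<noteq> 0"
proof -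
  have lam_u: "lam_u u l t = t *s lin_comb u l" for t
    unfolding lam_u_def lin_comb_def umap_def
    by (simp add: Finite_Cartesian_Product.vec_eq_iff sum_component sum_distrib_left algebra_simps)
  show ?thesis
  proof
    assume "inj (lam_u u l)"
    then have "lam_u u l 0 \<noteq> lam_u u l 1" by (metis injD zero_neq_one)
    then show "lin_comb u l \<noteq> 0" unfolding lam_u by auto
  next
    assume "lin_comb u l \<noteq> 0"
    then obtain k where k: "lin_comb u l $ k \<noteq> 0"
      by (auto simp: Finite_Cartesian_Product.vec_eq_iff)
    show "inj (lam_u u l)"
    proof (rule injI)
      fix s t assume "lam_u u l s = lam_u u l t"
      then have "(s *s lin_comb u l) $ k = (t *s lin_comb u l) $ k" unfolding lam_u by (rule arg_cong)
      then have "s * lin_comb u l $ k = t * lin_comb u l $ k" by simp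
      then show "s = t" using k by simp
    qed
  qed
qed

lemma surj_lam_v_iff: "surj (lam_v v l) \<longleftrightarrow> lin_comb v l \<noteq> 0"
proof -
  have lam_v: "lam_v v l x = vmap x (lin_comb v l)" for x
    unfolding lam_v_def vmap_lin_comb by (simp add: vmap_commute)
  show ?thesis
  proof
    assume "surj (lam_v v l)"
    then obtain x where "lam_v v l x = 1" by (metis surjD)
    then show "lin_comb v l \<noteq> 0" unfolding lam_v by (auto simp: vmap_zero)
  next
    assume "lin_comb v l \<noteq> 0"
    then obtain k where k: "lin_comb v l $ k \<noteq> 0" by (auto simp: Finite_Cartesian_Product.vec_eq_iff)
    show "surj (lam_v v l)"
    proof (rule surjI)
      fix c
      show "lam_v v l (axis k (c / lin_comb v l $ k)) = c"
        unfolding lam_v vmap_commute[of "axis _ _"] vmap_axis using k by simp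
    qed
  qed
qed

lemma globally_injective_iff: "globally_injective u \<longleftrightarrow> (\<forall>l. lin_comb u l = 0 \<longrightarrow> l = 0)"
  unfolding globally_injective_def inj_lam_u_iff by blast

lemma globally_surjective_iff: "globally_surjective v \<longleftrightarrow> (\<forall>l. lin_comb v l = 0 \<longrightarrow> l = 0)"
  unfolding globally_surjective_def surj_lam_v_iff by blast

definition generically_nonzero :: "(4 \<Rightarrow> complex^4) \<Rightarrow> bool" where
  "generically_nonzero w \<longleftrightarrow> (\<exists>Z. codim2_closed Z \<and> (\<forall>l. l \<noteq> 0 \<longrightarrow> l \<notin> Z \<longrightarrow> lin_comb w l \<noteq> 0))"

lemma locally_injective_iff: "locally_injective u \<longleftrightarrow> generically_nonzero u"
  unfolding locally_injective_def generically_nonzero_def inj_lam_u_iff ..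

lemma locally_surjective_iff: "locally_surjective v \<longleftrightarrow> generically_nonzero v"
  unfolding locally_surjective_def generically_nonzero_def surj_lam_v_iff ..

lemma is_rep_antisym:
  assumes "is_rep u v"
  shows "vmap (v i) (u j) = - vmap (v j) (u i)"
proof -
  have "vmap (v i) (umap (u j) 1) + vmap (v j) (umap (u i) 1) = 0"
    using assms unfolding is_rep_def by blast
  then show ?thesis unfolding umap_def by (simp add: eq_neg_iff_add_eq_0)
qed

lemma has_subrep_1b0_iff:
  "(\<exists>b\<in>{0..4}. has_subrep_1b0 u v b) \<longleftrightarrow> (\<forall>i j. vmap (v i) (u j) = 0)"
proof
  assume "\<exists>b\<in>{0..4}. has_subrep_1b0 u v b"
  then obtain W where W: "\<forall>i t. umap (u i) t \<in> W" "\<forall>i. \<forall>x\<in>W. vmap (v i) x = 0"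
    unfolding has_subrep_1b0_def by blast
  have "u j \<in> W" for j using W(1) unfolding umap_def by (metis vector_smult_lid)
  then show "\<forall>i j. vmap (v i) (u j) = 0" using W(2) by blast
next
  assume orth: "\<forall>i j. vmap (v i) (u j) = 0"
  define W where "W = vec.span (range u)"
  have "umap (u i) t \<in> W" for i t
    unfolding W_def umap_def by (intro vec.span_scale vec.span_base) simp
  moreover have "vmap (v i) x = 0" if "x \<in> W" for i x
  proof -
    have "vec.subspace {x. vmap (v i) x = 0}"
      unfolding vec.subspace_def by (simp add: vmap_zero vmap_add vmap_scale)
    then show ?thesis
      using vec.span_induct[of x "range u" "\<lambda>x. vmap (v i) x = 0"] that orth
      unfolding W_def by blast
  qed
  ultimately have "has_subrep_1b0 u v (vec.dim W)"
    unfolding has_subrep_1b0_def W_def using vec.subspace_span by blast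
  moreover have "vec.dim W \<le> 4" using dim_subset_UNIV_cart_gen[of W] by simp
  ultimately show "\<exists>b\<in>{0..4}. has_subrep_1b0 u v b" by auto
qed

lemma surj_lin_comb_if_independent:
  assumes "\<And>l. lin_comb w l = 0 \<Longrightarrow> l = 0"
  shows "surj (lin_comb w)"
proof -
  define U :: "complex^4^4" where "U = (\<chi> k j. w j $ k)"
  have lin_comb_eq: "lin_comb w = (*v) U"
    by (rule ext) (simp add: Finite_Cartesian_Product.vec_eq_iff U_def lin_comb_def matrix_vector_mult_def
        sum_component mult.commute)
  have lin: "Vector_Spaces.linear (*s) (*s) ((*v) U)" by (rule matrix_vector_mul_linear_gen)
  have "inj ((*v) U)"
    using vec.linear_inj_iff_eq_0[OF lin] assms unfolding lin_comb_eq by blast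
  then show ?thesis unfolding lin_comb_eq by (rule vec.linear_inj_imp_surj[OF lin])
qed

lemma eq_0_if_orthogonal_to_independent:
  assumes "\<And>l. lin_comb w l = 0 \<Longrightarrow> l = 0" "\<And>j. vmap x (w j) = 0"
  shows "x = 0"
proof -
  have "x $ k = 0" for k
  proof -
    obtain l where "axis k 1 = lin_comb w l"
      using surj_lin_comb_if_independent[OF assms(1)] by (metis surjD)
    then have "x $ k = vmap x (lin_comb w l)" by (metis vmap_axis mult_1_right)
    then show ?thesis unfolding vmap_lin_comb using assms(2) by simp
  qed
  then show ?thesis by (simp add: Finite_Cartesian_Product.vec_eq_iff)
qed

lemma generically_nonzero_if_pairing_nonzero:
  assumes anti: "\<And>i j. vmap (w' i) (w j) = - vmap (w' j) (w i)"
    and "vmap (w' a) (w b) \<noteq> 0"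
  shows "generically_nonzero w"
proof -
  define \<alpha> where "\<alpha> = (\<chi> i. vmap (w' a) (w i))"
  define \<beta> where "\<beta> = (\<chi> i. vmap (w' b) (w i))"
  have "vmap (w' i) (w i) = 0" for i using anti[of i i] by simp
  then have "\<alpha> $ a * \<beta> $ b - \<alpha> $ b * \<beta> $ a = vmap (w' a) (w b) ^ 2"
    unfolding \<alpha>_def \<beta>_def using anti[of b a] by (simp add: power2_eq_square)
  then have "codim2_closed {x. vmap \<alpha> x = 0 \<and> vmap \<beta> x = 0}"
    using assms(2) by (intro codim2_closed_common_kernel[where a = a and b = b]) simp
  moreover have "vmap \<alpha> l = vmap (w' a) (lin_comb w l)" "vmap \<beta> l = vmap (w' b) (lin_comb w l)" for l
    unfolding vmap_lin_comb unfolding \<alpha>_def \<beta>_def vmap_def by (simp_all add: mult.commute)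
  then have "l \<in> {x. vmap \<alpha> x = 0 \<and> vmap \<beta> x = 0}" if "lin_comb w l = 0" for l
    using that by (simp add: vmap_zero)
  ultimately show ?thesis
    unfolding generically_nonzero_def by (intro exI[of _ "{x. vmap \<alpha> x = 0 \<and> vmap \<beta> x = 0}"]) blast
qed

lemma not_generically_nonzero_if_annihilated:
  assumes "\<And>l. lin_comb w l = 0 \<Longrightarrow> l = 0" "\<And>i j. vmap (w' i) (w j) = 0"
  shows "\<not> generically_nonzero w'"
proof
  assume "generically_nonzero w'"
  then obtain Z where Z: "codim2_closed Z" "\<And>l. l \<noteq> 0 \<Longrightarrow> l \<notin> Z \<Longrightarrow> lin_comb w' l \<noteq> 0"
    unfolding generically_nonzero_def by blast
  have "w' i = 0" for i using eq_0_if_orthogonal_to_independent assms by blast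
  then have "lin_comb w' l = 0" for l by (simp add: lin_comb_def)
  moreover obtain l where "l \<noteq> 0" "l \<notin> Z" using codim2_closed_misses_nonzero[OF Z(1)] by blast
  ultimately show False using Z(2) by blast
qed

theorem mainTheorem9:
  fixes u v :: "4 \<Rightarrow> complex^4"
  assumes "is_rep u v"
  shows "(globally_injective u \<longrightarrow>
            (\<not> locally_surjective v \<longleftrightarrow> (\<exists>b\<in>{0..4}. has_subrep_1b0 u v b)))
       \<and> (globally_surjective v \<longrightarrow>
            (\<not> locally_injective u \<longleftrightarrow> (\<exists>b\<in>{0..4}. has_subrep_1b0 u v b)))"
proof -
  define orthogonal where "orthogonal \<longleftrightarrow> (\<forall>i j. vmap (v i) (u j) = 0)"
  have anti_uv: "vmap (v i) (u j) = - vmap (v j) (u i)" for i j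
    using is_rep_antisym[OF assms] .
  have anti_vu: "vmap (u i) (v j) = - vmap (u j) (v i)" for i j
    using anti_uv[of j i] by (simp only: vmap_commute)
  have "generically_nonzero u \<and> generically_nonzero v" if not_orthogonal: "\<not> orthogonal"
  proof -
    obtain i j where "vmap (v i) (u j) \<noteq> 0"
      using not_orthogonal unfolding orthogonal_def by blast
    moreover from this have "vmap (u j) (v i) \<noteq> 0" by (simp add: vmap_commute)
    ultimately show ?thesis
      using generically_nonzero_if_pairing_nonzero[where w' = v and w = u, OF anti_uv]
        generically_nonzero_if_pairing_nonzero[where w' = u and w = v, OF anti_vu] by blast
  qed
  moreover have "\<not> generically_nonzero v" if "globally_injective u" "orthogonal"
    using that not_generically_nonzero_if_annihilated[of u v]
    unfolding globally_injective_iff orthogonal_def by blast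
  moreover have "\<not> generically_nonzero u" if "globally_surjective v" "orthogonal"
    using that not_generically_nonzero_if_annihilated[of v u]
    unfolding globally_surjective_iff orthogonal_def by (simp add: vmap_commute)
  moreover have "(\<exists>b\<in>{0..4}. has_subrep_1b0 u v b) \<longleftrightarrow> orthogonal"
    unfolding has_subrep_1b0_iff orthogonal_def ..
  ultimately show ?thesis
    unfolding locally_injective_iff locally_surjective_iff by blast
qed

end
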